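(* Let $\alpha_1,\dots,\alpha_n$ be non-overlapping sequences of patterns, all of the same length $m$. Then there are a $\lambda$-term $P$ and an integer $l$ such that: (i) for every sequence of values $V_1,\dots,V_n$, every $i$, if $\alpha_i=p_1,\dots,p_m$ then $$P\,\lceil p_1(t_1^1,\dots,t_1^{k_1})\rceil\cdots\lceil p_m(t_m^1,\dots,t_m^{k_m})\rceil\,V_1\cdots V_n\rightarrow_v^k V_i\lceil t_1^1\rceil\cdots\lceil t_1^{k_1}\rceil\cdots\lceil t_m^1\rceil\cdots\lceil t_m^{k_m}\rceil$$ for some $k\le l$, whenever the $t_j^q$ are constructor terms; (ii) $P X_1\cdots X_m V_1\cdots V_n\rightarrow_v^k\bot$ for some $k\le l$, whenever each $X_j$ is either $\bot$ or of the form $\lceil t\rceil$ for a constructor term $t$, and either $X_1,\dots,X_m$ do not unify with any of the sequences $\alpha_1,\dots,\alpha_n$, or some $X_j$ is $\bot$.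
   Context: Fix finitely many constructor symbols $\mathbf{c}_1,\dots,\mathbf{c}_g$, each with an arity. Constructor terms are closed terms built from them; patterns are terms built from constructors and variables. For a pattern $p$ with $k$ variable occurrences, $p(t^1,\dots,t^k)$ denotes the constructor term obtained by replacing these occurrences, from left to right, by constructor terms $t^1,\dots,t^k$. Sequences of patterns are non-overlapping if no sequence of constructor terms is an instance of two distinct ones among them. A sequence $X_1,\dots,X_m$ of Scott encodings unifies with $\alpha_i=p_1,\dots,p_m$ if $X_j=\lceil p_j(t_j^1,\dots,t_j^{k_j})\rceil$ for all $j$, for some constructor terms $t_j^q$. $\lambda$-terms: $M::=x\mid\lambda x.M\mid MN$; values $V::=x\mid\lambda x.M$; weak call-by-value reduction $\rightarrow_v$: $(\lambda x.M)V\rightarrow_v M\{V/x\}$ for values $V$, closed under $ML$ and $LM$ contexts (no reduction under $\lambda$). Scott encoding: $\lceil \mathbf{c}_i(t_1,\dots,t_n)\rceil=\lambda x_1.\cdots\lambda x_g.\lambda y.\,x_i\lceil t_1\rceil\cdots\lceil t_n\rceil$. Error term: $\bot=\lambda x_1.\cdots\lambda x_g.\lambda y.\,y$. *)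

theory Defs
  imports Main
begin

datatype dB = Var nat | Lam dB | App dB dB

fun lift :: "dB \<Rightarrow> nat \<Rightarrow> dB" where
  "lift (Var i) k = (if i < k then Var i else Var (Suc i))"
| "lift (Lam t) k = Lam (lift t (Suc k))"
| "lift (App s t) k = App (lift s k) (lift t k)"

fun subst :: "dB \<Rightarrow> dB \<Rightarrow> nat \<Rightarrow> dB" where
  "subst (Var i) s k = (if k < i then Var (i - 1) else if i = k then s else Var i)"
| "subst (Lam t) s k = Lam (subst t (lift s 0) (Suc k))"
| "subst (App t u) s k = App (subst t s k) (subst u s k)"

fun is_val :: "dB \<Rightarrow> bool" where
  "is_val (Var _) = True"
| "is_val (Lam _) = True"
| "is_val (App _ _) = False"

inductive beta_v :: "dB \<Rightarrow> dB \<Rightarrow> bool" where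
  beta: "is_val V \<Longrightarrow> beta_v (App (Lam M) V) (subst M V 0)"
| appL: "beta_v M M' \<Longrightarrow> beta_v (App M L) (App M' L)"
| appR: "beta_v M M' \<Longrightarrow> beta_v (App L M) (App L M')"

definition apps :: "dB \<Rightarrow> dB list \<Rightarrow> dB" where
  "apps M Ns = foldl App M Ns"

definition lams :: "nat \<Rightarrow> dB \<Rightarrow> dB" where
  "lams n M = (Lam ^^ n) M"

text \<open>Constructors are indexed 0..g-1 (c_{i+1} is index i); ar gives arities.\<close>

datatype cterm = C nat "cterm list"

datatype pat = PVar | PC nat "pat list"

fun wf_ct :: "nat \<Rightarrow> (nat \<Rightarrow> nat) \<Rightarrow> cterm \<Rightarrow> bool" where
  "wf_ct g ar (C c ts) = (c < g \<and> length ts = ar c \<and> (\<forall>t\<in>set ts. wf_ct g ar t))"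

fun wf_pat :: "nat \<Rightarrow> (nat \<Rightarrow> nat) \<Rightarrow> pat \<Rightarrow> bool" where
  "wf_pat g ar PVar = True"
| "wf_pat g ar (PC c ps) = (c < g \<and> length ps = ar c \<and> (\<forall>p\<in>set ps. wf_pat g ar p))"

fun nvars :: "pat \<Rightarrow> nat" where
  "nvars PVar = 1"
| "nvars (PC c ps) = sum_list (map nvars ps)"

text \<open>Instantiation p(t^1,...,t^k): variable occurrences replaced left to right.\<close>
fun inst :: "pat \<Rightarrow> cterm list \<Rightarrow> cterm"
and insts :: "pat list \<Rightarrow> cterm list \<Rightarrow> cterm list" where
  "inst PVar ts = hd ts"
| "inst (PC c ps) ts = C c (insts ps ts)"
| "insts [] ts = []"
| "insts (p # ps) ts = inst p (take (nvars p) ts) # insts ps (drop (nvars p) ts)"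

definition is_instance :: "nat \<Rightarrow> (nat \<Rightarrow> nat) \<Rightarrow> cterm list \<Rightarrow> pat list \<Rightarrow> bool" where
  "is_instance g ar ts ps \<longleftrightarrow> length ts = length ps \<and>
     (\<forall>j<length ps. \<exists>us. length us = nvars (ps ! j) \<and> (\<forall>u\<in>set us. wf_ct g ar u)
                          \<and> ts ! j = inst (ps ! j) us)"

definition non_overlapping :: "nat \<Rightarrow> (nat \<Rightarrow> nat) \<Rightarrow> pat list list \<Rightarrow> bool" where
  "non_overlapping g ar alphas \<longleftrightarrow>
     (\<forall>i<length alphas. \<forall>j<length alphas. i \<noteq> j \<longrightarrow>
        \<not> (\<exists>ts. (\<forall>t\<in>set ts. wf_ct g ar t) \<and> is_instance g ar ts (alphas ! i)
                 \<and> is_instance g ar ts (alphas ! j)))"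

text \<open>enc (c_{i+1}(t_1..t_n)) = \<lambda>x_1..x_g y. x_{i+1} enc t_1 .. enc t_n; x_{i+1} is Var (g - i).\<close>
fun enc :: "nat \<Rightarrow> cterm \<Rightarrow> dB" where
  "enc g (C c ts) = lams (Suc g) (apps (Var (g - c)) (map (enc g) ts))"

definition err :: "nat \<Rightarrow> dB" where
  "err g = lams (Suc g) (Var 0)"

definition unifies :: "nat \<Rightarrow> (nat \<Rightarrow> nat) \<Rightarrow> dB list \<Rightarrow> pat list \<Rightarrow> bool" where
  "unifies g ar Xs alpha \<longleftrightarrow> length Xs = length alpha \<and>
     (\<forall>j<length alpha. \<exists>us. length us = nvars (alpha ! j) \<and> (\<forall>u\<in>set us. wf_ct g ar u)
                          \<and> Xs ! j = enc g (inst (alpha ! j) us))"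

end

theory Submission
  imports Defs
begin

text \<open>Applying a Scott encoding \<open>\<lceil>c\<^sub>k(t\<^sub>1,\<dots>,t\<^sub>n)\<rceil>\<close> to \<open>g + 1\<close> values selects the \<open>k\<close>-th one and
  feeds it \<open>\<lceil>t\<^sub>1\<rceil> \<dots> \<lceil>t\<^sub>n\<rceil>\<close>, while \<open>\<bottom>\<close> selects the last one. So matching a constructor pattern
  is a single case distinction whose branches continue with the fields or give up, and a variable
  pattern is a case distinction that only rules out \<open>\<bottom>\<close> and keeps the argument. The term \<open>P\<close> tries
  \<open>\<alpha>\<^sub>1, \<alpha>\<^sub>2, \<dots>\<close> in turn, each attempt keeping all arguments \<open>X\<^sub>1 \<dots> X\<^sub>m V\<^sub>1 \<dots> V\<^sub>n\<close> so that the
  next attempt can restart on them; the first successful attempt passes the stored terms to \<open>V\<^sub>i\<close>,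
  and reaching \<open>\<bottom>\<close> or exhausting the list yields \<open>\<bottom>\<close>. On an instance of \<open>\<alpha>\<^sub>i\<close> every earlier attempt
  mismatches by non-overlapping, and since the patterns are fixed, the number of steps is bounded
  independently of the arguments.\<close>

section \<open>De Bruijn terms and simultaneous substitution\<close>

fun closed_at :: "nat \<Rightarrow> dB \<Rightarrow> bool" where
  "closed_at k (Var i) = (i < k)"
| "closed_at k (Lam M) = closed_at (Suc k) M"
| "closed_at k (App M N) = (closed_at k M \<and> closed_at k N)"

lemma closed_at_mono: "closed_at k M \<Longrightarrow> k \<le> k' \<Longrightarrow> closed_at k' M"
  by (induction M arbitrary: k k') auto

lemma closed_at_0D: "closed_at 0 M \<Longrightarrow> closed_at k M"
  using closed_at_mono by blast

lemma subst_closed_at: "closed_at k M \<Longrightarrow> k \<le> k' \<Longrightarrow> subst M s k' = M"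
  by (induction M arbitrary: k k' s) auto

lemma subst_lift: "subst (lift M k) s k = M"
  by (induction M arbitrary: k s) auto

lemma lift_lift: "i \<le> k \<Longrightarrow> lift (lift M i) (Suc k) = lift (lift M k) i"
  by (induction M arbitrary: i k) auto

definition liftn :: "nat \<Rightarrow> dB \<Rightarrow> dB" where
  "liftn n M = ((\<lambda>M. lift M 0) ^^ n) M"

lemma liftn_0 [simp]: "liftn 0 M = M"
  by (simp add: liftn_def)

lemma liftn_Suc: "liftn (Suc n) M = lift (liftn n M) 0"
  by (simp add: liftn_def)

lemma liftn_lift: "liftn n (lift M 0) = lift (liftn n M) 0"
  unfolding liftn_def by (rule funpow_swap1[symmetric])

lemma lift_liftn: "lift (liftn n M) n = lift (liftn n M) 0"
  by (induction n) (simp_all add: liftn_Suc lift_lift)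

lemma subst_liftn: "subst (liftn (Suc n) M) s n = liftn n M"
  by (metis liftn_Suc lift_liftn subst_lift)

lemma lams_0 [simp]: "lams 0 M = M"
  by (simp add: lams_def)

lemma lams_Suc: "lams (Suc n) M = Lam (lams n M)"
  by (simp add: lams_def)

lemma subst_lams: "subst (lams n M) s k = lams n (subst M (liftn n s) (k + n))"
  by (induction n arbitrary: s k) (simp_all add: lams_Suc liftn_lift liftn_Suc)

lemma closed_at_lams: "closed_at k (lams n M) = closed_at (n + k) M"
  by (induction n arbitrary: k) (simp_all add: lams_Suc)

lemma apps_Nil [simp]: "apps M [] = M"
  by (simp add: apps_def)

lemma apps_Cons [simp]: "apps M (N # Ns) = apps (App M N) Ns"
  by (simp add: apps_def)

lemma apps_append: "apps M (Ns @ Ns') = apps (apps M Ns) Ns'"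
  by (simp add: apps_def)

lemma closed_at_apps: "closed_at k (apps M Ns) = (closed_at k M \<and> (\<forall>N\<in>set Ns. closed_at k N))"
  by (induction Ns arbitrary: M) auto

lemma subst_apps: "subst (apps M Ns) s k = apps (subst M s k) (map (\<lambda>N. subst N s k) Ns)"
  by (induction Ns arbitrary: M) auto

text \<open>Simultaneous substitution of \<open>As\<close> for the variables bound by \<open>lams (length As)\<close>;
  the first argument replaces the outermost binder.\<close>

fun substs :: "dB \<Rightarrow> dB list \<Rightarrow> dB" where
  "substs M [] = M"
| "substs M (A # As) = substs (subst M (liftn (length As) A) (length As)) As"

lemma substs_apps: "substs (apps M Ns) As = apps (substs M As) (map (\<lambda>N. substs N As) Ns)"
  by (induction As arbitrary: M Ns) (simp_all add: subst_apps comp_def)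

lemma substs_closed: "closed_at 0 M \<Longrightarrow> substs M As = M"
  by (induction As arbitrary: M) (auto simp: subst_closed_at)

lemma substs_liftn: "substs (liftn (length As) M) As = M"
  by (induction As arbitrary: M) (auto simp: subst_liftn)

lemma substs_Var: "i < length As \<Longrightarrow> substs (Var i) As = As ! (length As - Suc i)"
proof (induction As arbitrary: i)
  case (Cons A As)
  then show ?case
    by (cases "i = length As") (simp_all add: substs_liftn nth_Cons' Suc_diff_Suc)
qed simp

text \<open>The de Bruijn index, under \<open>n\<close> binders, of the variable bound by the \<open>a\<close>-th of them
  (counted from the outside).\<close>

definition arg_var :: "nat \<Rightarrow> nat \<Rightarrow> dB" where
  "arg_var n a = Var (n - Suc a)"

lemma substs_arg_var: "a < length As \<Longrightarrow> substs (arg_var (length As) a) As = As ! a"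
  by (simp add: arg_var_def substs_Var)

lemma closed_at_arg_var: "a < n \<Longrightarrow> closed_at n (arg_var n a)"
  by (simp add: arg_var_def)

lemma is_val_lams: "is_val M \<or> 0 < n \<Longrightarrow> is_val (lams n M)"
  by (cases n) (simp_all add: lams_Suc)

definition red_within :: "dB \<Rightarrow> dB \<Rightarrow> nat \<Rightarrow> bool" where
  "red_within M N l \<longleftrightarrow> (\<exists>k\<le>l. (beta_v ^^ k) M N)"

lemma red_within_refl: "red_within M M l"
  unfolding red_within_def by (intro exI[of _ 0]) simp

lemma red_within_trans: "red_within M N a \<Longrightarrow> red_within N Q b \<Longrightarrow> a + b \<le> l \<Longrightarrow> red_within M Q l"
  unfolding red_within_def by (meson add_mono le_trans relpowp_trans)

lemma red_within_add [trans]: "red_within M N a \<Longrightarrow> red_within N Q b \<Longrightarrow> red_within M Q (a + b)"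
  using red_within_trans by blast

lemma red_within_mono: "red_within M N a \<Longrightarrow> a \<le> l \<Longrightarrow> red_within M N l"
  unfolding red_within_def using le_trans by blast

lemma beta_v_apps: "beta_v M M' \<Longrightarrow> beta_v (apps M Ns) (apps M' Ns)"
  by (induction Ns arbitrary: M M') (auto intro: beta_v.appL)

lemma relpowp_beta_v_apps: "(beta_v ^^ k) M M' \<Longrightarrow> (beta_v ^^ k) (apps M Ns) (apps M' Ns)"
proof (induction k arbitrary: M')
  case (Suc k)
  then obtain M'' where "(beta_v ^^ k) M M''" "beta_v M'' M'"
    by (auto elim: relpowp_Suc_E)
  with Suc.IH show ?case by (meson beta_v_apps relpowp_Suc_I)
qed simp

lemma red_within_apps: "red_within M M' l \<Longrightarrow> red_within (apps M Ns) (apps M' Ns) l"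
  unfolding red_within_def using relpowp_beta_v_apps by blast

lemma beta_v_lams:
  "is_val A \<Longrightarrow> beta_v (App (lams (Suc n) M) A) (lams n (subst M (liftn n A) n))"
  using beta_v.beta[of A "lams n M"] by (simp add: lams_Suc subst_lams)

lemma relpowp_beta_v_lams:
  "\<forall>A\<in>set As. is_val A \<Longrightarrow> (beta_v ^^ length As) (apps (lams (length As) M) As) (substs M As)"
proof (induction As arbitrary: M)
  case (Cons A As)
  let ?M' = "subst M (liftn (length As) A) (length As)"
  have "beta_v (apps (App (lams (Suc (length As)) M) A) As) (apps (lams (length As) ?M') As)"
    using Cons.prems by (simp add: beta_v_lams beta_v_apps)
  moreover have "(beta_v ^^ length As) (apps (lams (length As) ?M') As) (substs M (A # As))"
    using Cons by simp
  ultimately show ?case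
    by (simp del: relpowp.simps) (rule relpowp_Suc_I2)
qed simp

lemma red_within_lams:
  "\<forall>A\<in>set As. is_val A \<Longrightarrow> length As = n \<Longrightarrow> red_within (apps (lams n M) As) (substs M As) n"
  unfolding red_within_def using relpowp_beta_v_lams by blast

lemma red_within_lams_closed:
  "\<forall>A\<in>set As. is_val A \<Longrightarrow> length As = n \<Longrightarrow> closed_at 0 M \<Longrightarrow> red_within (apps (lams n M) As) M n"
  using red_within_lams[of As n M] by (simp add: substs_closed)

lemma red_within_lams_select:
  assumes "\<forall>A\<in>set As. is_val A" "length As = n" "\<forall>a\<in>set f. a < n"
  shows "red_within (apps (lams n (apps H (map (arg_var n) f))) As) (apps (substs H As) (map (nth As) f)) n"
proof -
  have "map (\<lambda>N. substs N As) (map (arg_var n) f) = map (nth As) f"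
    using assms(2,3) substs_arg_var[of _ As] by simp
  then have "substs (apps H (map (arg_var n) f)) As = apps (substs H As) (map (nth As) f)"
    by (simp only: substs_apps)
  then show ?thesis
    using red_within_lams[OF assms(1,2), of "apps H (map (arg_var n) f)"] by simp
qed

lemma red_within_lams_copy_prefix:
  assumes "closed_at 0 M" "\<forall>A\<in>set As. is_val A" "length As = n" "m \<le> n"
  shows "red_within (apps (lams n (apps M (map (arg_var n) ([0..<m] @ [0..<n])))) As) (apps M (take m As @ As)) n"
proof -
  have idx: "\<forall>k\<in>set ([0..<m] @ [0..<n]). k < n"
    using assms(4) by auto
  have "map (nth As) ([0..<m] @ [0..<n]) = take m As @ As"
    using assms(3,4) by (intro nth_equalityI) (auto simp: nth_append)
  then show ?thesis
    using red_within_lams_select[OF assms(2,3) idx, of M] assms(1) by (simp add: substs_closed)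
qed

section \<open>Scott encodings as case distinctions\<close>

lemma is_val_enc [simp]: "is_val (enc g t)"
  by (cases t) (simp add: lams_Suc)

lemma is_val_err [simp]: "is_val (err g)"
  by (simp add: err_def lams_Suc)

lemma closed_enc [simp]: "closed_at 0 (enc g t)"
  by (induction g t rule: enc.induct) (auto simp: closed_at_lams closed_at_apps intro: closed_at_0D)

lemma closed_err [simp]: "closed_at 0 (err g)"
  by (simp add: err_def closed_at_lams)

declare enc.simps [simp del]

lemma red_within_enc_Scott:
  assumes "c < g" "length Bs = g" "\<forall>B\<in>set (Bs @ [E]). is_val B"
  shows "red_within (apps (enc g (C c ts)) (Bs @ [E])) (apps (Bs ! c) (map (enc g) ts)) (Suc g)"
proof -
  have "substs (apps (Var (g - c)) (map (enc g) ts)) (Bs @ [E]) = apps (Bs ! c) (map (enc g) ts)"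
    using assms by (simp add: substs_apps substs_Var substs_closed nth_append comp_def)
  then show ?thesis
    using red_within_lams[of "Bs @ [E]" "Suc g" "apps (Var (g - c)) (map (enc g) ts)"] assms
    by (simp add: enc.simps)
qed

lemma red_within_err_Scott:
  assumes "length Bs = g" "\<forall>B\<in>set (Bs @ [E]). is_val B"
  shows "red_within (apps (err g) (Bs @ [E])) E (Suc g)"
  using red_within_lams[of "Bs @ [E]" "Suc g" "Var 0"] assms
  by (simp add: err_def substs_Var nth_append)

text \<open>Case distinction on a Scott-encoded first argument: \<open>Bs ! c\<close> handles \<open>c\<close>, \<open>E\<close> handles \<open>\<bottom>\<close>.\<close>

definition case_term :: "dB list \<Rightarrow> dB \<Rightarrow> dB" where
  "case_term Bs E = Lam (apps (Var 0) (Bs @ [E]))"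

lemma closed_case_term: "\<forall>B\<in>set (Bs @ [E]). closed_at 0 B \<Longrightarrow> closed_at 0 (case_term Bs E)"
  by (auto simp: case_term_def closed_at_apps intro: closed_at_0D)

lemma red_within_case_term:
  assumes "is_val X" "\<forall>B\<in>set (Bs @ [E]). closed_at 0 B"
  shows "red_within (apps (case_term Bs E) (X # Ns)) (apps (apps X (Bs @ [E])) Ns) 1"
proof -
  have "substs (apps (Var 0) (Bs @ [E])) [X] = apps X (Bs @ [E])"
    using assms(2) by (simp add: subst_apps map_idI subst_closed_at[of 0])
  then have "red_within (apps (lams 1 (apps (Var 0) (Bs @ [E]))) [X]) (apps X (Bs @ [E])) 1"
    using red_within_lams[of "[X]" 1 "apps (Var 0) (Bs @ [E])"] assms(1) by simp
  then show ?thesis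
    using red_within_apps by (fastforce simp: case_term_def lams_Suc)
qed

lemma red_within_case_term_enc:
  assumes "c < g" "length Bs = g" "\<forall>B\<in>set (Bs @ [E]). is_val B \<and> closed_at 0 B"
  shows "red_within (apps (case_term Bs E) (enc g (C c ts) # Ns)) (apps (Bs ! c) (map (enc g) ts @ Ns)) (Suc (Suc g))"
proof -
  have "red_within (apps (case_term Bs E) (enc g (C c ts) # Ns)) (apps (apps (enc g (C c ts)) (Bs @ [E])) Ns) 1"
    using assms(3) by (intro red_within_case_term) auto
  moreover have "red_within (apps (apps (enc g (C c ts)) (Bs @ [E])) Ns) (apps (Bs ! c) (map (enc g) ts @ Ns)) (Suc g)"
    using red_within_apps[OF red_within_enc_Scott] assms by (simp add: apps_append)
  ultimately show ?thesis
    by (rule red_within_trans) simp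
qed

lemma red_within_case_term_err:
  assumes "length Bs = g" "\<forall>B\<in>set (Bs @ [E]). is_val B \<and> closed_at 0 B"
  shows "red_within (apps (case_term Bs E) (err g # Ns)) (apps E Ns) (Suc (Suc g))"
proof -
  have "red_within (apps (case_term Bs E) (err g # Ns)) (apps (apps (err g) (Bs @ [E])) Ns) 1"
    using assms(2) by (intro red_within_case_term) auto
  moreover have "red_within (apps (apps (err g) (Bs @ [E])) Ns) (apps E Ns) (Suc g)"
    using red_within_apps[OF red_within_err_Scott] assms by simp
  ultimately show ?thesis
    by (rule red_within_trans) simp
qed

section \<open>Left-to-right pattern matching\<close>

text \<open>\<open>None\<close> stands for \<open>\<bottom>\<close>. The arguments are inspected in the same order as by the matching
  terms below, so \<open>\<bottom>\<close> yields \<open>Error\<close> only if it is reached before a mismatch.\<close>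

datatype match_result = Match "cterm list" | Mismatch | Error

function match_pats :: "pat list \<Rightarrow> cterm option list \<Rightarrow> match_result" where
  "match_pats [] [] = Match []"
| "match_pats (PVar # ps) (None # os) = Error"
| "match_pats (PVar # ps) (Some t # os) =
     (case match_pats ps os of Match us \<Rightarrow> Match (t # us) | r \<Rightarrow> r)"
| "match_pats (PC c qs # ps) (None # os) = Error"
| "match_pats (PC c qs # ps) (Some (C c' ts) # os) =
     (if c = c' \<and> length ts = length qs then match_pats (qs @ ps) (map Some ts @ os) else Mismatch)"
| "match_pats [] (x # os) = Mismatch"
| "match_pats (p # ps) [] = Mismatch"
  by pat_completeness auto
termination by (relation "measure (\<lambda>(ps, os). size_list size ps)") auto

lemma match_pats_Error_imp_None: "match_pats ps os = Error \<Longrightarrow> None \<in> set os"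
  by (induction ps os rule: match_pats.induct) (simp_all split: match_result.splits if_splits)

lemma length_insts [simp]: "length (insts ps us) = length ps"
  by (induction ps arbitrary: us) auto

lemma insts_append:
  "insts (qs @ ps) us = insts qs (take (sum_list (map nvars qs)) us) @ insts ps (drop (sum_list (map nvars qs)) us)"
  by (induction qs arbitrary: us) (simp_all add: drop_take take_take drop_drop add.commute)

lemma match_pats_insts: "length us = sum_list (map nvars ps) \<Longrightarrow> match_pats ps (map Some (insts ps us)) = Match us"
proof (induction ps arbitrary: us rule: measure_induct_rule[of "size_list size"])
  case (less ps)
  show ?case
  proof (cases ps)
    case (Cons p ps')
    show ?thesis
    proof (cases p)
      case PVar
      with Cons less.prems obtain u us' where "us = u # us'"
        by (cases us) auto
      with less Cons PVar show ?thesis by simp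
    next
      case (PC c qs)
      with less.IH[of "qs @ ps'" us] less.prems Cons show ?thesis
        by (simp add: insts_append)
    qed
  qed (use less.prems in simp)
qed

lemma match_pats_Match_length: "match_pats ps os = Match us \<Longrightarrow> length us = sum_list (map nvars ps)"
  by (induction ps os arbitrary: us rule: match_pats.induct) (auto split: match_result.splits if_splits)

lemma match_pats_Match_insts: "match_pats ps os = Match us \<Longrightarrow> os = map Some (insts ps us)"
proof (induction ps os arbitrary: us rule: match_pats.induct)
  case (3 ps t os)
  then show ?case by (cases "match_pats ps os") auto
next
  case (5 c qs ps c' ts os)
  let ?k = "sum_list (map nvars qs)"
  from 5 have c: "c = c'" "length ts = length qs" and m: "match_pats (qs @ ps) (map Some ts @ os) = Match us"
    by (simp_all split: if_splits)
  then have "map Some ts @ os = map Some (insts qs (take ?k us)) @ map Some (insts ps (drop ?k us))"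
    using "5.IH" by (simp add: insts_append)
  with c have "ts = insts qs (take ?k us)" "os = map Some (insts ps (drop ?k us))"
    by (simp_all add: append_eq_append_conv)
  with c show ?case by simp
qed simp_all

lemma match_pats_Match_wf:
  "match_pats ps os = Match us \<Longrightarrow> \<forall>t. Some t \<in> set os \<longrightarrow> wf_ct g ar t \<Longrightarrow> \<forall>u\<in>set us. wf_ct g ar u"
proof (induction ps os arbitrary: us rule: match_pats.induct)
  case (3 ps t os)
  then show ?case by (cases "match_pats ps os") auto
next
  case (5 c qs ps c' ts os)
  then show ?case by (auto split: if_splits)
qed simp_all

lemma nth_insts:
  "length us = sum_list (map nvars ps) \<Longrightarrow> j < length ps \<Longrightarrow>
     \<exists>vs. length vs = nvars (ps ! j) \<and> set vs \<subseteq> set us \<and> insts ps us ! j = inst (ps ! j) vs"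
proof (induction ps arbitrary: us j)
  case (Cons p ps)
  show ?case
  proof (cases j)
    case 0
    with Cons.prems show ?thesis
      by (auto intro!: exI[of _ "take (nvars p) us"] dest: in_set_takeD)
  next
    case (Suc j')
    with Cons.prems Cons.IH[of "drop (nvars p) us" j'] show ?thesis
      by (auto dest: in_set_dropD)
  qed
qed simp

lemma insts_concat:
  "length tss = length ps \<Longrightarrow> \<forall>j<length ps. length (tss ! j) = nvars (ps ! j) \<Longrightarrow>
     insts ps (concat tss) = map (\<lambda>j. inst (ps ! j) (tss ! j)) [0..<length ps]"
proof (induction ps arbitrary: tss)
  case (Cons p ps)
  then obtain ts tss' where tss: "tss = ts # tss'"
    by (cases tss) auto
  with Cons.prems have "length ts = nvars p" "\<forall>j<length ps. length (tss' ! j) = nvars (ps ! j)"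
    by force+
  with Cons tss show ?case
    by (simp add: map_upt_Suc del: upt_Suc)
qed simp

lemma length_concat_nvars:
  "length tss = length ps \<Longrightarrow> \<forall>j<length ps. length (tss ! j) = nvars (ps ! j) \<Longrightarrow>
     length (concat tss) = sum_list (map nvars ps)"
  by (simp add: length_concat) (metis list_eq_iff_nth_eq length_map nth_map)

lemma wf_ct_inst:
  shows "wf_pat g ar p \<longrightarrow> length us = nvars p \<longrightarrow> (\<forall>u\<in>set us. wf_ct g ar u) \<longrightarrow> wf_ct g ar (inst p us)"
    and "(\<forall>p\<in>set ps. wf_pat g ar p) \<longrightarrow> length vs = sum_list (map nvars ps) \<longrightarrow> (\<forall>u\<in>set vs. wf_ct g ar u) \<longrightarrow>
           (\<forall>t\<in>set (insts ps vs). wf_ct g ar t)"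
proof (induction p us and ps vs rule: inst_insts.induct)
  case (1 ts)
  then show ?case by (cases ts) auto
next
  case (4 p ps ts)
  then show ?case by (auto dest: in_set_takeD in_set_dropD)
qed auto

lemma wf_ct_map_inst:
  assumes "\<forall>p\<in>set ps. wf_pat g ar p" "length tss = length ps"
    "\<forall>j<length ps. length (tss ! j) = nvars (ps ! j)" "\<forall>ts\<in>set tss. \<forall>t\<in>set ts. wf_ct g ar t"
  shows "\<forall>t\<in>set (map (\<lambda>j. inst (ps ! j) (tss ! j)) [0..<length ps]). wf_ct g ar t"
proof
  fix t
  assume "t \<in> set (map (\<lambda>j. inst (ps ! j) (tss ! j)) [0..<length ps])"
  then obtain j where j: "j < length ps" "t = inst (ps ! j) (tss ! j)"
    by auto
  with assms(1,2,4) have "wf_pat g ar (ps ! j)" "\<forall>u\<in>set (tss ! j). wf_ct g ar u"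
    by auto
  with j assms(3) show "wf_ct g ar t"
    using wf_ct_inst(1) by blast
qed

lemma match_pats_Match_is_instance:
  assumes m: "match_pats ps (map Some ts) = Match us" and wf: "\<forall>t\<in>set ts. wf_ct g ar t"
  shows "is_instance g ar ts ps"
proof -
  have ts: "ts = insts ps us"
    using match_pats_Match_insts[OF m] by simp
  have "\<forall>u\<in>set us. wf_ct g ar u"
    using match_pats_Match_wf[OF m] wf by auto
  with nth_insts[OF match_pats_Match_length[OF m]] show ?thesis
    unfolding is_instance_def ts by (metis length_insts subsetD)
qed

lemma is_instance_map_inst:
  assumes "\<forall>p\<in>set ps. wf_pat g ar p" "length tss = length ps"
    "\<forall>j<length ps. length (tss ! j) = nvars (ps ! j)" "\<forall>ts\<in>set tss. \<forall>t\<in>set ts. wf_ct g ar t"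
  shows "is_instance g ar (map (\<lambda>j. inst (ps ! j) (tss ! j)) [0..<length ps]) ps"
  using assms unfolding is_instance_def by (auto intro!: exI[of _ "tss ! _"])

lemma is_instance_unifies: "is_instance g ar ts ps \<Longrightarrow> unifies g ar (map (enc g) ts) ps"
  unfolding is_instance_def unifies_def by force

fun first_match :: "pat list list \<Rightarrow> nat \<Rightarrow> cterm option list \<Rightarrow> (nat \<times> cterm list) option" where
  "first_match [] i os = None"
| "first_match (a # as) i os = (case match_pats a os of
      Match us \<Rightarrow> Some (i, us)
    | Mismatch \<Rightarrow> first_match as (Suc i) os
    | Error \<Rightarrow> None)"

lemma first_match_Some_imp: "first_match as i os = Some (k, us) \<Longrightarrow> \<exists>a\<in>set as. match_pats a os = Match us"
  by (induction as arbitrary: i) (auto split: match_result.splits)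

lemma first_match_eq_Some:
  "j < length as \<Longrightarrow> \<forall>j'<j. match_pats (as ! j') os = Mismatch \<Longrightarrow> match_pats (as ! j) os = Match us \<Longrightarrow>
     first_match as i os = Some (i + j, us)"
proof (induction as arbitrary: i j)
  case (Cons a as)
  show ?case
  proof (cases j)
    case 0
    with Cons.prems show ?thesis
      by simp
  next
    case (Suc j')
    with Cons.prems(2) have "match_pats a os = Mismatch" "\<forall>k<j'. match_pats (as ! k) os = Mismatch"
      by (metis nth_Cons_0 zero_less_Suc, metis Suc_mono nth_Cons_Suc)
    with Cons Suc show ?thesis
      by simp
  qed
qed simp

section \<open>The matching terms\<close>

context
  fixes g :: nat and ar :: "nat \<Rightarrow> nat"
begin

fun enc_opt :: "cterm option \<Rightarrow> dB" where
  "enc_opt None = err g"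
| "enc_opt (Some t) = enc g t"

lemma enc_opt_comp_Some [simp]: "enc_opt \<circ> Some = enc g"
  by auto

lemma is_val_enc_opt [simp]: "is_val (enc_opt x)"
  by (cases x) simp_all

definition ignore_fields :: "dB \<Rightarrow> dB list" where
  "ignore_fields M = map (\<lambda>c. lams (ar c) M) [0..<g]"

lemma length_ignore_fields [simp]: "length (ignore_fields M) = g"
  by (simp add: ignore_fields_def)

lemma ignore_fields_closed_val:
  "closed_at 0 M \<Longrightarrow> is_val M \<Longrightarrow> \<forall>B\<in>set (ignore_fields M). closed_at 0 B \<and> is_val B"
  by (auto simp: ignore_fields_def closed_at_lams is_val_lams intro: closed_at_0D)

lemma red_within_ignore_fields:
  assumes "c < g" "length ts = ar c" "closed_at 0 M"
  shows "red_within (apps (ignore_fields M ! c) (map (enc g) ts @ Ns)) (apps M Ns) (ar c)"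
  using red_within_apps[OF red_within_lams_closed[of "map (enc g) ts" "ar c" M]] assms
  by (simp add: ignore_fields_def apps_append)

function match_cost :: "pat list \<Rightarrow> nat \<Rightarrow> nat" where
  "match_cost [] N = 0"
| "match_cost (PVar # ps) N = 2 * Suc (length ps + N) + Suc (Suc g) + sum ar {..<g} + match_cost ps (Suc N)"
| "match_cost (PC c qs # ps) N = Suc (Suc g) + sum ar {..<g} + length ps + N + match_cost (qs @ ps) N"
  by pat_completeness auto
termination by (relation "measure (\<lambda>(ps, N). size_list size ps)") auto

lemma ar_le_sum: "c < g \<Longrightarrow> ar c \<le> sum ar {..<g}"
  by (intro member_le_sum) auto

context
  fixes F K :: dB and J :: nat
begin

text \<open>Discards \<open>k\<close> arguments (the fields and the remaining terms to be matched), then calls \<open>F\<close>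
  on the first \<open>J\<close> of the \<open>N\<close> saved arguments.\<close>

definition mismatch_branch :: "nat \<Rightarrow> nat \<Rightarrow> dB" where
  "mismatch_branch k N = lams (k + N) (apps F (map (arg_var (k + N)) [k..<k + J]))"

text \<open>\<open>matcher ps N\<close> expects the encodings of terms to be matched against \<open>ps\<close>, followed
  by \<open>N\<close> saved arguments \<open>R\<close>. On a match it calls \<open>K\<close> on \<open>R\<close> and the encodings of the terms
  bound to the pattern variables, on a mismatch \<open>F\<close> on the first \<open>J\<close> saved arguments, and on
  \<open>\<bottom>\<close> it returns \<open>\<bottom>\<close>. A term matched by a variable is first copied and then appended to the
  saved arguments once it has been checked not to be \<open>\<bottom>\<close>.\<close>

function matcher :: "pat list \<Rightarrow> nat \<Rightarrow> dB" where
  "matcher [] N = K"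
| "matcher (PVar # ps) N =
     lams (Suc (length ps + N))
       (apps (case_term (ignore_fields (matcher ps (Suc N))) (lams (Suc (length ps + N)) (err g)))
             (map (arg_var (Suc (length ps + N))) ([0..<Suc (length ps + N)] @ [0])))"
| "matcher (PC c qs # ps) N =
     case_term (map (\<lambda>c'. if c' = c then matcher (qs @ ps) N else mismatch_branch (ar c' + length ps) N) [0..<g])
       (lams (length ps + N) (err g))"
  by pat_completeness auto
termination by (relation "measure (\<lambda>(ps, N). size_list size ps)") auto

definition match_target :: "dB list \<Rightarrow> match_result \<Rightarrow> dB" where
  "match_target R r = (case r of
      Match us \<Rightarrow> apps K (R @ map (enc g) us)
    | Mismatch \<Rightarrow> apps F (take J R)
    | Error \<Rightarrow> err g)"

lemma match_target_snoc:
  "J \<le> length R \<Longrightarrow> match_target (R @ [enc g t]) r =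
     match_target R (case r of Match us \<Rightarrow> Match (t # us) | r \<Rightarrow> r)"
  by (simp add: match_target_def split: match_result.split)

context
  assumes closed_F: "closed_at 0 F" and closed_K: "closed_at 0 K"
    and is_val_F: "is_val F" and is_val_K: "is_val K" and J_pos: "0 < J"
begin

lemma closed_matcher: "J \<le> N \<Longrightarrow> closed_at 0 (matcher ps N)"
proof (induction ps N rule: matcher.induct)
  case (2 ps N)
  then show ?case
    by (auto simp: closed_at_lams closed_at_apps closed_at_arg_var case_term_def ignore_fields_def
          intro: closed_at_0D)
next
  case (3 c qs ps N)
  then show ?case
    unfolding matcher.simps by (intro closed_case_term)
      (auto simp: mismatch_branch_def closed_at_lams closed_at_apps arg_var_def closed_at_0D[OF closed_F]
        closed_at_0D)
qed (simp add: closed_K)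

lemma is_val_matcher: "is_val (matcher ps N)"
  by (cases "(ps, N)" rule: matcher.cases) (simp_all add: is_val_K lams_Suc case_term_def)

lemma red_within_matcher_PVar:
  assumes "is_val X" "\<forall>A\<in>set As. is_val A" "length As = length ps + N" "J \<le> N"
  shows "red_within (apps (matcher (PVar # ps) N) (X # As))
           (apps (case_term (ignore_fields (matcher ps (Suc N))) (lams (Suc (length ps + N)) (err g)))
              (X # As @ [X]))
           (Suc (length ps + N))"
proof -
  let ?n = "Suc (length ps + N)"
  let ?H = "case_term (ignore_fields (matcher ps (Suc N))) (lams ?n (err g))"
  have "closed_at 0 ?H"
    using assms(4) closed_matcher[of "Suc N" ps] is_val_matcher
    by (intro closed_case_term) (auto dest: ignore_fields_closed_val simp: closed_at_lams closed_at_0D)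
  moreover have "map (nth (X # As)) ([0..<?n] @ [0]) = X # As @ [X]"
  proof -
    have "[0..<?n] = [0..<length (X # As)]"
      using assms(3) by simp
    then show ?thesis
      by (simp only: map_append map_nth) simp
  qed
  moreover have "red_within (apps (lams ?n (apps ?H (map (arg_var ?n) ([0..<?n] @ [0])))) (X # As))
      (apps (substs ?H (X # As)) (map (nth (X # As)) ([0..<?n] @ [0]))) ?n"
    using assms(1-3) by (intro red_within_lams_select) auto
  ultimately show ?thesis
    by (simp only: matcher.simps substs_closed)
qed

lemma PVar_branches_closed_val:
  "J \<le> Suc N \<Longrightarrow> \<forall>B\<in>set (ignore_fields (matcher ps (Suc N)) @ [lams n (err g)]). is_val B \<and> closed_at 0 B"
  using closed_matcher[of "Suc N" ps] is_val_matcher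
  by (auto dest: ignore_fields_closed_val simp: closed_at_lams closed_at_0D is_val_lams lams_Suc)

lemma red_within_matcher_PVar_enc:
  assumes "c < g" "length ts = ar c" "\<forall>A\<in>set As. is_val A" "length As = length ps + N" "J \<le> N"
  shows "red_within (apps (matcher (PVar # ps) N) (enc g (C c ts) # As))
           (apps (matcher ps (Suc N)) (As @ [enc g (C c ts)])) (Suc (length ps + N) + Suc (Suc g) + ar c)"
proof -
  let ?Bs = "ignore_fields (matcher ps (Suc N))" and ?E = "lams (Suc (length ps + N)) (err g)"
  have "red_within (apps (matcher (PVar # ps) N) (enc g (C c ts) # As))
      (apps (case_term ?Bs ?E) (enc g (C c ts) # As @ [enc g (C c ts)])) (Suc (length ps + N))"
    using assms(3-5) by (intro red_within_matcher_PVar) auto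
  also have "red_within (apps (case_term ?Bs ?E) (enc g (C c ts) # As @ [enc g (C c ts)]))
      (apps (?Bs ! c) (map (enc g) ts @ As @ [enc g (C c ts)])) (Suc (Suc g))"
    using assms(1,5) PVar_branches_closed_val[of N ps] by (intro red_within_case_term_enc) auto
  also have "red_within (apps (?Bs ! c) (map (enc g) ts @ As @ [enc g (C c ts)]))
      (apps (matcher ps (Suc N)) (As @ [enc g (C c ts)])) (ar c)"
    using assms(1,2,5) closed_matcher by (intro red_within_ignore_fields) auto
  finally show ?thesis .
qed

lemma red_within_mismatch_branch:
  assumes "length Ds = k" "length R = N" "\<forall>A\<in>set (Ds @ R). is_val A" "J \<le> N"
  shows "red_within (apps (mismatch_branch k N) (Ds @ R)) (apps F (take J R)) (k + N)"
proof -
  have "map (nth (Ds @ R)) [k..<k + J] = take J R"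
    using assms(1,2,4) by (intro nth_equalityI) (auto simp: nth_append)
  then show ?thesis
    using red_within_lams_select[of "Ds @ R" "k + N" "[k..<k + J]" F] assms
    by (simp add: mismatch_branch_def substs_closed closed_F)
qed

lemma PC_branches_closed_val:
  "J \<le> N \<Longrightarrow> \<forall>B\<in>set (map (\<lambda>c'. if c' = c then matcher (qs @ ps) N else mismatch_branch (ar c' + length ps) N) [0..<g]
                        @ [lams (length ps + N) (err g)]).
     is_val B \<and> closed_at 0 B"
  using closed_matcher[of N "qs @ ps"] is_val_matcher J_pos closed_at_0D[OF closed_F]
  by (auto simp: mismatch_branch_def closed_at_lams closed_at_apps arg_var_def closed_at_0D
      is_val_lams lams_Suc)

lemma red_within_matcher_err:
  assumes "\<forall>A\<in>set As. is_val A" "length As = length ps + N" "J \<le> N"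
  shows "red_within (apps (matcher (p # ps) N) (err g # As)) (err g) (match_cost (p # ps) N)"
proof (cases p)
  case PVar
  let ?n = "Suc (length ps + N)"
  have "red_within (apps (matcher (PVar # ps) N) (err g # As))
      (apps (case_term (ignore_fields (matcher ps (Suc N))) (lams ?n (err g))) (err g # As @ [err g])) ?n"
    using assms by (intro red_within_matcher_PVar) auto
  also have "red_within (apps (case_term (ignore_fields (matcher ps (Suc N))) (lams ?n (err g))) (err g # As @ [err g]))
      (apps (lams ?n (err g)) (As @ [err g])) (Suc (Suc g))"
    using assms(3) PVar_branches_closed_val[of N ps] by (intro red_within_case_term_err) auto
  also have "red_within (apps (lams ?n (err g)) (As @ [err g])) (err g) ?n"
    using assms by (intro red_within_lams_closed) auto
  finally show ?thesis
    using PVar by (auto elim: red_within_mono)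
next
  case (PC c qs)
  let ?Bs = "map (\<lambda>c'. if c' = c then matcher (qs @ ps) N else mismatch_branch (ar c' + length ps) N) [0..<g]"
  have "red_within (apps (case_term ?Bs (lams (length ps + N) (err g))) (err g # As))
      (apps (lams (length ps + N) (err g)) As) (Suc (Suc g))"
    using assms(3) PC_branches_closed_val[of N c qs ps] by (intro red_within_case_term_err) auto
  also have "red_within (apps (lams (length ps + N) (err g)) As) (err g) (length ps + N)"
    using assms by (intro red_within_lams_closed) auto
  finally show ?thesis
    using PC by (auto elim: red_within_mono)
qed

lemma red_within_matcher_PC_match:
  assumes "c < g" "J \<le> N"
  shows "red_within (apps (matcher (PC c qs # ps) N) (enc g (C c ts) # As))
           (apps (matcher (qs @ ps) N) (map (enc g) ts @ As)) (Suc (Suc g))"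
  using red_within_case_term_enc[OF assms(1) _ PC_branches_closed_val[OF assms(2), of c qs ps], of ts As]
    assms(1)
  by simp

lemma red_within_matcher_PC_mismatch:
  assumes "c' \<noteq> c" "c' < g" "length ts = ar c'" "J \<le> N"
    and "length Ds = length ps" "length R = N" "\<forall>A\<in>set (Ds @ R). is_val A"
  shows "red_within (apps (matcher (PC c qs # ps) N) (enc g (C c' ts) # Ds @ R))
           (apps F (take J R)) (Suc (Suc g) + (ar c' + length ps + N))"
proof -
  have "red_within (apps (matcher (PC c qs # ps) N) (enc g (C c' ts) # Ds @ R))
      (apps (mismatch_branch (ar c' + length ps) N) (map (enc g) ts @ Ds @ R)) (Suc (Suc g))"
    using red_within_case_term_enc[OF assms(2) _ PC_branches_closed_val[OF assms(4), of c qs ps],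
        of ts "Ds @ R"] assms(1,2)
    by simp
  also have "red_within (apps (mismatch_branch (ar c' + length ps) N) (map (enc g) ts @ Ds @ R))
      (apps F (take J R)) (ar c' + length ps + N)"
  proof -
    have len: "length (map (enc g) ts @ Ds) = ar c' + length ps"
      using assms(3,5) by simp
    have vals: "\<forall>A\<in>set ((map (enc g) ts @ Ds) @ R). is_val A"
      using assms(7) by auto
    show ?thesis
      using red_within_mismatch_branch[OF len assms(6) vals assms(4)] by simp
  qed
  finally show ?thesis .
qed

lemma red_within_matcher:
  assumes "J \<le> N" "length os = length ps" "\<forall>t. Some t \<in> set os \<longrightarrow> wf_ct g ar t"
    and "\<forall>p\<in>set ps. wf_pat g ar p" "length R = N" "\<forall>A\<in>set R. is_val A"
  shows "red_within (apps (matcher ps N) (map enc_opt os @ R)) (match_target R (match_pats ps os)) (match_cost ps N)"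
  using assms
proof (induction ps os arbitrary: N R rule: match_pats.induct)
  case 1
  then show ?case
    by (simp add: match_target_def red_within_refl)
next
  case (2 ps os)
  then show ?case
    using red_within_matcher_err[of "map enc_opt os @ R" ps N PVar] by (simp add: ball_Un match_target_def)
next
  case (3 ps t os)
  obtain c ts where t: "t = C c ts"
    by (cases t)
  with "3.prems" have wf: "c < g" "length ts = ar c"
    by auto
  have "red_within (apps (matcher (PVar # ps) N) (map enc_opt (Some t # os) @ R))
      (apps (matcher ps (Suc N)) (map enc_opt os @ R @ [enc g t]))
      (Suc (length ps + N) + Suc (Suc g) + ar c)"
    using red_within_matcher_PVar_enc[OF wf, of "map enc_opt os @ R" ps N] "3.prems" t by (simp add: ball_Un)
  also have "red_within (apps (matcher ps (Suc N)) (map enc_opt os @ R @ [enc g t]))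
      (match_target R (match_pats (PVar # ps) (Some t # os))) (match_cost ps (Suc N))"
    using "3.IH"[of "Suc N" "R @ [enc g t]"] "3.prems" match_target_snoc[of R t] by auto
  finally show ?case
    using ar_le_sum[OF wf(1)] by (auto elim: red_within_mono)
next
  case (4 c qs ps os)
  then show ?case
    using red_within_matcher_err[of "map enc_opt os @ R" ps N "PC c qs"] by (simp add: ball_Un match_target_def)
next
  case (5 c qs ps c' ts os)
  from "5.prems" have wf: "c < g" "length qs = ar c" "c' < g" "length ts = ar c'"
    by auto
  show ?case
  proof (cases "c' = c")
    case True
    with wf have eq: "c = c' \<and> length ts = length qs"
      by simp
    then have eqm: "match_pats (PC c qs # ps) (Some (C c' ts) # os) = match_pats (qs @ ps) (map Some ts @ os)"
      by simp
    have "red_within (apps (matcher (PC c qs # ps) N) (map enc_opt (Some (C c' ts) # os) @ R))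
        (apps (matcher (qs @ ps) N) (map enc_opt (map Some ts @ os) @ R)) (Suc (Suc g))"
      using red_within_matcher_PC_match[OF wf(1) "5.prems"(1), of qs ps ts "map enc_opt os @ R"] True
      by simp
    also have "red_within (apps (matcher (qs @ ps) N) (map enc_opt (map Some ts @ os) @ R))
        (match_target R (match_pats (PC c qs # ps) (Some (C c' ts) # os))) (match_cost (qs @ ps) N)"
      unfolding eqm by (rule "5.IH"[OF eq]) (use "5.prems" eq in auto)
    finally show ?thesis
      by (rule red_within_mono) simp
  next
    case False
    have "red_within (apps (matcher (PC c qs # ps) N) (enc g (C c' ts) # map enc_opt os @ R))
        (apps F (take J R)) (Suc (Suc g) + (ar c' + length ps + N))"
      using red_within_matcher_PC_mismatch[OF False wf(3,4) "5.prems"(1), of "map enc_opt os" ps R qs]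
        "5.prems"
      by (simp add: ball_Un)
    with False ar_le_sum[OF wf(3)] show ?thesis
      by (auto simp: match_target_def elim: red_within_mono)
  qed
qed simp_all

end

end

section \<open>Trying the pattern sequences in turn\<close>

text \<open>\<open>call_branch J m i r\<close> receives the \<open>J = m + n\<close> arguments \<open>X\<^sub>1 \<dots> X\<^sub>m V\<^sub>1 \<dots> V\<^sub>n\<close> of the
  dispatcher followed by the \<open>r\<close> terms bound by the \<open>i\<close>-th pattern sequence, and passes the latter
  to \<open>V\<^sub>i\<close> (counted from 0).\<close>

definition call_branch :: "nat \<Rightarrow> nat \<Rightarrow> nat \<Rightarrow> nat \<Rightarrow> dB" where
  "call_branch J m i r = lams (J + r) (apps (arg_var (J + r) (m + i)) (map (arg_var (J + r)) [J..<J + r]))"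

text \<open>\<open>dispatch m J as i\<close> takes \<open>J\<close> arguments and hands the matcher for the first sequence of
  \<open>as\<close> a copy of the first \<open>m\<close> of them followed by all \<open>J\<close> as saved arguments, with the dispatcher for the
  remaining sequences as failure continuation.\<close>

fun dispatch :: "nat \<Rightarrow> nat \<Rightarrow> pat list list \<Rightarrow> nat \<Rightarrow> dB" where
  "dispatch m J [] i = lams J (err g)"
| "dispatch m J (a # as) i =
     lams J (apps (matcher (dispatch m J as (Suc i)) (call_branch J m i (sum_list (map nvars a))) J a J)
                  (map (arg_var J) ([0..<m] @ [0..<J])))"

fun dispatch_cost :: "nat \<Rightarrow> pat list list \<Rightarrow> nat" where
  "dispatch_cost J [] = J"
| "dispatch_cost J (a # as) = J + match_cost a J + (J + sum_list (map nvars a)) + dispatch_cost J as"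

lemma closed_call_branch: "m + i < J \<Longrightarrow> closed_at 0 (call_branch J m i r)"
  by (auto simp: call_branch_def closed_at_lams closed_at_apps arg_var_def)

lemma is_val_call_branch: "0 < J \<Longrightarrow> is_val (call_branch J m i r)"
  by (simp add: call_branch_def is_val_lams)

lemma closed_is_val_dispatch:
  "m + i + length as \<le> J \<Longrightarrow> 0 < J \<Longrightarrow> closed_at 0 (dispatch m J as i) \<and> is_val (dispatch m J as i)"
proof (induction as arbitrary: i)
  case Nil
  then show ?case
    by (simp add: closed_at_lams closed_at_0D is_val_lams)
next
  case (Cons a as)
  then have "closed_at 0 (matcher (dispatch m J as (Suc i)) (call_branch J m i (sum_list (map nvars a))) J a J)"
    by (intro closed_matcher closed_call_branch is_val_call_branch) auto
  with Cons.prems show ?case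
    by (auto simp: closed_at_lams closed_at_apps arg_var_def is_val_lams intro: closed_at_0D)
qed

lemma red_within_call_branch:
  assumes "length As = J" "\<forall>A\<in>set As. is_val A" "m + i < J" "length us = r"
  shows "red_within (apps (call_branch J m i r) (As @ map (enc g) us)) (apps (As ! (m + i)) (map (enc g) us)) (J + r)"
proof -
  have vals: "\<forall>A\<in>set (As @ map (enc g) us). is_val A"
    using assms(2) by auto
  have len: "length (As @ map (enc g) us) = J + r"
    using assms(1,4) by simp
  have "map (nth (As @ map (enc g) us)) [J..<J + r] = map (enc g) us"
    using assms(1,4) by (intro nth_equalityI) (auto simp: nth_append)
  moreover have "substs (arg_var (J + r) (m + i)) (As @ map (enc g) us) = As ! (m + i)"
    using substs_arg_var[of "m + i" "As @ map (enc g) us"] assms by (simp add: nth_append)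
  ultimately show ?thesis
    using red_within_lams_select[OF vals len, of "[J..<J + r]" "arg_var (J + r) (m + i)"]
    by (simp add: call_branch_def)
qed

lemma red_within_dispatch:
  assumes "length os = m" "\<forall>t. Some t \<in> set os \<longrightarrow> wf_ct g ar t"
    and "\<forall>a\<in>set as. length a = m \<and> (\<forall>p\<in>set a. wf_pat g ar p)"
    and "J = m + length Vs" "\<forall>V\<in>set Vs. is_val V" "i + length as \<le> length Vs"
  shows "red_within (apps (dispatch m J as i) (map enc_opt os @ Vs))
           (case first_match as i os of None \<Rightarrow> err g | Some (k, us) \<Rightarrow> apps (Vs ! k) (map (enc g) us))
           (dispatch_cost J as)"
  using assms(3,6)
proof (induction as arbitrary: i)
  case Nil
  then show ?case
    using assms red_within_lams_closed[of "map enc_opt os @ Vs" J "err g"] by (simp add: ball_Un)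
next
  case (Cons a as)
  define F where "F = dispatch m J as (Suc i)"
  define K where "K = call_branch J m i (sum_list (map nvars a))"
  define As where "As = map enc_opt os @ Vs"
  have J: "m + Suc i + length as \<le> J" "0 < J"
    using Cons.prems(2) assms(4) by auto
  have FK: "closed_at 0 F" "closed_at 0 K" "is_val F" "is_val K" "0 < J"
    using closed_is_val_dispatch[OF J] J by (auto simp: F_def K_def closed_call_branch is_val_call_branch)
  have As: "length As = J" "\<forall>A\<in>set As. is_val A"
    using assms(1,4,5) by (auto simp: As_def ball_Un)
  have "red_within (apps (dispatch m J (a # as) i) As) (apps (matcher F K J a J) (map enc_opt os @ As)) J"
  proof -
    have "take m As = map enc_opt os" "m \<le> J"
      using assms(1,4) by (simp_all add: As_def)
    then show ?thesis
      using red_within_lams_copy_prefix[OF closed_matcher[OF FK order.refl] As(2,1), of m]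
      by (simp add: F_def K_def)
  qed
  also have "red_within (apps (matcher F K J a J) (map enc_opt os @ As)) (match_target F K J As (match_pats a os))
      (match_cost a J)"
    using red_within_matcher[OF FK] Cons.prems assms(1,2) As by auto
  also have "red_within (match_target F K J As (match_pats a os))
      (case first_match (a # as) i os of None \<Rightarrow> err g | Some (k, us) \<Rightarrow> apps (Vs ! k) (map (enc g) us))
      (J + sum_list (map nvars a) + dispatch_cost J as)"
  proof (cases "match_pats a os")
    case (Match us)
    have "As ! (m + i) = Vs ! i"
      using assms(1) by (simp add: As_def nth_append)
    then show ?thesis
      using Match red_within_call_branch[OF As, of m i us] match_pats_Match_length[OF Match]
        Cons.prems assms(4)
      by (auto simp: match_target_def K_def elim: red_within_mono)
  next
    case Mismatch
    then show ?thesis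
      using Cons.IH[of "Suc i"] Cons.prems As(1)
      by (auto simp: match_target_def F_def As_def elim: red_within_mono)
  next
    case Error
    then show ?thesis
      by (simp add: match_target_def red_within_refl)
  qed
  finally show ?case
    by (simp add: As_def add.assoc)
qed

end

lemma first_match_instance:
  assumes wf: "\<forall>a\<in>set alphas. \<forall>p\<in>set a. wf_pat g ar p" and len: "\<forall>a\<in>set alphas. length a = m"
    and novl: "non_overlapping g ar alphas" and i: "i < length alphas"
    and tss: "length tss = m" "\<forall>j<m. length (tss ! j) = nvars (alphas ! i ! j)"
      "\<forall>ts\<in>set tss. \<forall>t\<in>set ts. wf_ct g ar t"
  shows "first_match alphas 0 (map (\<lambda>j. Some (inst (alphas ! i ! j) (tss ! j))) [0..<m]) = Some (i, concat tss)"
proof -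
  let ?a = "alphas ! i"
  let ?ts = "map (\<lambda>j. inst (?a ! j) (tss ! j)) [0..<m]"
  have a: "?a \<in> set alphas" "length ?a = m"
    using i len by auto
  have "insts ?a (concat tss) = ?ts" "length (concat tss) = sum_list (map nvars ?a)"
    using insts_concat[of tss ?a] length_concat_nvars[of tss ?a] tss a(2) by simp_all
  then have match: "match_pats ?a (map Some ?ts) = Match (concat tss)"
    using match_pats_insts by metis
  have inst: "is_instance g ar ?ts ?a"
    using is_instance_map_inst[of ?a g ar tss] wf a tss by simp
  have wf_ts: "\<forall>t\<in>set ?ts. wf_ct g ar t"
    using wf_ct_map_inst[of ?a g ar tss] wf a tss by simp
  have "match_pats (alphas ! j) (map Some ?ts) = Mismatch" if "j < i" for j
  proof (cases "match_pats (alphas ! j) (map Some ?ts)")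
    case (Match us)
    then have "is_instance g ar ?ts (alphas ! j)"
      using match_pats_Match_is_instance wf_ts by blast
    moreover have "j < length alphas" "j \<noteq> i"
      using that i by auto
    ultimately show ?thesis
      using novl inst wf_ts i unfolding non_overlapping_def by blast
  next
    case Error
    then show ?thesis
      using match_pats_Error_imp_None by fastforce
  qed
  with match i show ?thesis
    using first_match_eq_Some[of i alphas "map Some ?ts" "concat tss" 0] by (simp add: comp_def)
qed

lemma decode_enc_opt:
  assumes "\<forall>X\<in>set Xs. X = err g \<or> (\<exists>t. wf_ct g ar t \<and> X = enc g t)"
  obtains os where "Xs = map (enc_opt g) os" "\<forall>t. Some t \<in> set os \<longrightarrow> wf_ct g ar t"
    "err g \<in> set Xs \<Longrightarrow> None \<in> set os"
proof -
  have "\<exists>os. Xs = map (enc_opt g) os \<and> (\<forall>t. Some t \<in> set os \<longrightarrow> wf_ct g ar t) \<and> (err g \<in> set Xs \<longrightarrow> None \<in> set os)"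
    using assms
  proof (induction Xs)
    case (Cons X Xs)
    then obtain os where os: "Xs = map (enc_opt g) os" "\<forall>t. Some t \<in> set os \<longrightarrow> wf_ct g ar t"
      "err g \<in> set Xs \<longrightarrow> None \<in> set os"
      by auto
    show ?case
    proof (cases "X = err g")
      case True
      with os show ?thesis
        by (intro exI[of _ "None # os"]) auto
    next
      case False
      with Cons.prems obtain t where "wf_ct g ar t" "X = enc g t"
        by auto
      with os False show ?thesis
        by (intro exI[of _ "Some t # os"]) auto
    qed
  qed simp
  with that show ?thesis
    by blast
qed

lemma first_match_None:
  assumes "\<forall>t. Some t \<in> set os \<longrightarrow> wf_ct g ar t"
    and "(\<forall>a\<in>set alphas. \<not> unifies g ar (map (enc_opt g) os) a) \<or> None \<in> set os"
  shows "first_match alphas i os = None"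
proof (rule ccontr)
  assume "first_match alphas i os \<noteq> None"
  then obtain k us where "first_match alphas i os = Some (k, us)"
    by auto
  then obtain a where a: "a \<in> set alphas" "match_pats a os = Match us"
    using first_match_Some_imp by blast
  define ts where "ts = insts a us"
  have os: "os = map Some ts"
    using match_pats_Match_insts[OF a(2)] by (simp add: ts_def)
  with assms(1) have "is_instance g ar ts a"
    using match_pats_Match_is_instance a(2) by auto
  then have "unifies g ar (map (enc_opt g) os) a"
    using is_instance_unifies by (simp add: os comp_def)
  with assms(2) a(1) os show False
    by auto
qed

lemma red_within_dispatch_instance:
  assumes wf: "\<forall>a\<in>set alphas. \<forall>p\<in>set a. wf_pat g ar p" and len: "\<forall>a\<in>set alphas. length a = m"
    and novl: "non_overlapping g ar alphas" and J: "J = m + length alphas"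
    and Vs: "length Vs = length alphas" "\<forall>V\<in>set Vs. is_val V"
    and tss: "i < length alphas" "length tss = m" "\<forall>j<m. length (tss ! j) = nvars (alphas ! i ! j)"
      "\<forall>ts\<in>set tss. \<forall>t\<in>set ts. wf_ct g ar t"
  shows "red_within (apps (dispatch g ar m J alphas 0) (map (\<lambda>j. enc g (inst (alphas ! i ! j) (tss ! j))) [0..<m] @ Vs))
           (apps (Vs ! i) (map (enc g) (concat tss))) (dispatch_cost g ar J alphas)"
proof -
  let ?os = "map (\<lambda>j. Some (inst (alphas ! i ! j) (tss ! j))) [0..<m]"
  have "length (alphas ! i) = m" "\<forall>p\<in>set (alphas ! i). wf_pat g ar p"
    using tss(1) wf len by auto
  then have "\<forall>t. Some t \<in> set ?os \<longrightarrow> wf_ct g ar t"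
    using wf_ct_map_inst[of "alphas ! i" g ar tss] tss by auto
  with wf len J Vs red_within_dispatch[of ?os m g ar alphas J Vs 0] first_match_instance[OF wf len novl tss]
  show ?thesis
    by (simp add: comp_def)
qed

lemma red_within_dispatch_err:
  assumes wf: "\<forall>a\<in>set alphas. \<forall>p\<in>set a. wf_pat g ar p" and len: "\<forall>a\<in>set alphas. length a = m"
    and J: "J = m + length alphas" and Vs: "length Vs = length alphas" "\<forall>V\<in>set Vs. is_val V"
    and Xs: "length Xs = m" "\<forall>X\<in>set Xs. X = err g \<or> (\<exists>t. wf_ct g ar t \<and> X = enc g t)"
      "(\<forall>a\<in>set alphas. \<not> unifies g ar Xs a) \<or> err g \<in> set Xs"
  shows "red_within (apps (dispatch g ar m J alphas 0) (Xs @ Vs)) (err g) (dispatch_cost g ar J alphas)"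
proof -
  obtain os where os: "Xs = map (enc_opt g) os" "\<forall>t. Some t \<in> set os \<longrightarrow> wf_ct g ar t"
    "err g \<in> set Xs \<Longrightarrow> None \<in> set os"
    using decode_enc_opt[OF Xs(2)] by blast
  with Xs(3) have "first_match alphas 0 os = None"
    by (intro first_match_None) auto
  with wf len J Vs Xs(1) os red_within_dispatch[of os m g ar alphas J Vs 0] show ?thesis
    by simp
qed

theorem lemma9:
  fixes g :: nat and ar :: "nat \<Rightarrow> nat" and alphas :: "pat list list" and m :: nat
  assumes wf: "\<forall>a\<in>set alphas. \<forall>p\<in>set a. wf_pat g ar p"
    and len: "\<forall>a\<in>set alphas. length a = m"
    and novl: "non_overlapping g ar alphas"
  shows "\<exists>P (l::nat).
     (\<forall>Vs i tss. length Vs = length alphas \<longrightarrow> (\<forall>V\<in>set Vs. is_val V) \<longrightarrow> i < length alphas \<longrightarrow>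
        length tss = m \<longrightarrow> (\<forall>j<m. length (tss ! j) = nvars (alphas ! i ! j)) \<longrightarrow>
        (\<forall>ts\<in>set tss. \<forall>t\<in>set ts. wf_ct g ar t) \<longrightarrow>
        (\<exists>k\<le>l. (beta_v ^^ k)
                  (apps P (map (\<lambda>j. enc g (inst (alphas ! i ! j) (tss ! j))) [0..<m] @ Vs))
                  (apps (Vs ! i) (map (enc g) (concat tss)))))
   \<and> (\<forall>Vs Xs. length Vs = length alphas \<longrightarrow> (\<forall>V\<in>set Vs. is_val V) \<longrightarrow> length Xs = m \<longrightarrow>
        (\<forall>X\<in>set Xs. X = err g \<or> (\<exists>t. wf_ct g ar t \<and> X = enc g t)) \<longrightarrow>
        ((\<forall>a\<in>set alphas. \<not> unifies g ar Xs a) \<or> err g \<in> set Xs) \<longrightarrow>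
        (\<exists>k\<le>l. (beta_v ^^ k) (apps P (Xs @ Vs)) (err g)))"
proof -
  define J where "J = m + length alphas"
  show ?thesis
    unfolding red_within_def[symmetric]
    using red_within_dispatch_instance[OF wf len novl J_def] red_within_dispatch_err[OF wf len J_def]
    by blast
qed

end
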